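(* The AMC (allocating marginal contributions) policy is temporal Nash stable.
   Context: Players: a finite set $N=\{a_1,\dots,a_n\}$. A characteristic function is $v:2^N\to\mathbb{R}_{\ge 0}$ with $v(\emptyset)=0$, monotone and bounded: $\mathsf{min}\le v(S)\le v(T)\le\mathsf{max}$ for all nonempty $S\subseteq T\subseteq N$, for fixed constants $0<\mathsf{min}\le\mathsf{max}$. Online process: an arrival order is a permutation $\pi=(\pi_1,\dots,\pi_n)$ of $N$; player $\pi_t$ arrives at time $t$; $\pi_{\prec t}$ is the set of players arriving before time $t$ and $\pi^{-1}(i)$ the arrival time of $i$. For $S\subseteq N$, $\pi_{|S}$ denotes the players of $S$ in the relative order of $\pi$. Let $C^{t-1}$ be the coalition structure of players arrived before time $t$ ($C^0=\emptyset$). At time $t$, player $\pi_t$ either joins an existing coalition $S\in C^{t-1}$ or forms $\{\pi_t\}$ (choice $S=\emptyset$); decisions are never revised. AMC policy: for a coalition $S$ and $i\in S$, $\varphi_i(S,\pi_{|S})=v((\pi_{\prec\pi^{-1}(i)}\cap S)\cup\{i\})-v(\pi_{\prec\pi^{-1}(i)}\cap S)$. Greedy players: $\pi_t$ chooses $S\in C^{t-1}\cup\{\emptyset\}$ maximizing $\varphi_{\pi_t}(S\cup\{\pi_t\},\pi_{|S\cup\{\pi_t\}})$ (predetermined tie-breaking). $C_g^t$ is the structure after time $t$ and $C_g=C_g^n$ the final one. For a time $t$, $\overline{C}_g^{t}\subseteq C_g$ denotes the set of coalitions of the final structure $C_g$ whose first-arriving member arrived at time at most $t$. Temporal Nash stability: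 for every $v$ and $\pi$, every $S\in C_g$ and every $i\in S$, there is no $S'\in\overline{C}_g^{\pi^{-1}(i)-1}\cup\{\emptyset\}$ with $\varphi_i(S'\cup\{i\},\pi_{|S'\cup\{i\}})>\varphi_i(S,\pi_{|S})$. *)

theory Defs
  imports Complex_Main
begin

definition arr :: "'a list \<Rightarrow> 'a \<Rightarrow> nat" where
  "arr \<pi> i = (LEAST k. k < length \<pi> \<and> \<pi> ! k = i)"

text \<open>Arrival order: a duplicate-free list \<pi>; the arrival time of player i is
  arr \<pi> i + 1 (list positions are 0-based).\<close>

definition arrived_before :: "'a list \<Rightarrow> 'a \<Rightarrow> 'a set" where
  "arrived_before \<pi> i = {j \<in> set \<pi>. arr \<pi> j < arr \<pi> i}"

definition amc :: "('a set \<Rightarrow> real) \<Rightarrow> 'a list \<Rightarrow> 'a \<Rightarrow> 'a set \<Rightarrow> real" where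
  "amc v \<pi> i S = v ((arrived_before \<pi> i \<inter> S) \<union> {i}) - v (arrived_before \<pi> i \<inter> S)"

text \<open>greedy_struct v \<pi> t C: C is a coalition structure reachable after the first t arrivals
  when every arriving player greedily chooses a maximising option (any tie-breaking).\<close>
inductive greedy_struct :: "('a set \<Rightarrow> real) \<Rightarrow> 'a list \<Rightarrow> nat \<Rightarrow> 'a set set \<Rightarrow> bool"
  for v \<pi> where
  init: "greedy_struct v \<pi> 0 {}"
| step: "\<lbrakk> greedy_struct v \<pi> t C; t < length \<pi>; S \<in> C \<union> {{}};
           \<forall>S' \<in> C \<union> {{}}. amc v \<pi> (\<pi> ! t) (S' \<union> {\<pi> ! t}) \<le> amc v \<pi> (\<pi> ! t) (S \<union> {\<pi> ! t}) \<rbrakk>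
         \<Longrightarrow> greedy_struct v \<pi> (Suc t) (insert (S \<union> {\<pi> ! t}) (C - {S}))"

definition first_arrival :: "'a list \<Rightarrow> 'a set \<Rightarrow> nat" where
  "first_arrival \<pi> S = Min (arr \<pi> ` S)"

end

theory Submission
  imports Defs
begin

text \<open>The AMC payoff of a player only depends on the members of his coalition that arrived
  before him. Hence a later arrival changes neither the payoff of a player already present nor
  his payoff for deviating to a coalition founded before he arrived; removing the newcomer from
  every coalition maps the new structure back onto the old one. So the best response a player
  chose greedily on arrival stays a best response against all coalitions that existed then, and
  temporal Nash stability is an invariant of the greedy process.\<close>

definition temporally_nash_stable :: "('a set \<Rightarrow> real) \<Rightarrow> 'a list \<Rightarrow> 'a set set \<Rightarrow> bool" where
  "temporally_nash_stable v \<pi> C \<longleftrightarrow>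
     (\<forall>S \<in> C. \<forall>i \<in> S. \<forall>S'. (S' \<in> C \<and> first_arrival \<pi> S' < arr \<pi> i \<or> S' = {}) \<longrightarrow>
        amc v \<pi> i (S' \<union> {i}) \<le> amc v \<pi> i S)"

lemma arr_nth:
  assumes "distinct \<pi>" "t < length \<pi>"
  shows "arr \<pi> (\<pi> ! t) = t"
  unfolding arr_def
proof (rule Least_equality)
  fix k assume "k < length \<pi> \<and> \<pi> ! k = \<pi> ! t"
  then show "t \<le> k" using assms nth_eq_iff_index_eq by fastforce
qed (use assms in simp)

lemma arr_less_if_in_take:
  assumes "distinct \<pi>" "j \<in> set (take t \<pi>)"
  shows "arr \<pi> j < t"
proof -
  obtain k where "k < t" "k < length \<pi>" "j = \<pi> ! k"
    using assms(2) by (auto simp: in_set_conv_nth)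
  then show ?thesis using arr_nth[OF assms(1)] by simp
qed

lemma amc_Diff_later:
  assumes "arr \<pi> i < arr \<pi> x"
  shows "amc v \<pi> i (A - {x}) = amc v \<pi> i A"
proof -
  have "x \<notin> arrived_before \<pi> i" using assms by (auto simp: arrived_before_def)
  then have "arrived_before \<pi> i \<inter> (A - {x}) = arrived_before \<pi> i \<inter> A" by blast
  then show ?thesis by (simp add: amc_def)
qed

lemma first_arrival_Diff_later:
  assumes "finite S" "first_arrival \<pi> S < arr \<pi> x"
  shows "first_arrival \<pi> (S - {x}) = first_arrival \<pi> S"
proof (cases "S = {}")
  case False
  then obtain j where j: "j \<in> S" "arr \<pi> j = first_arrival \<pi> S"
    using assms(1) Min_in unfolding first_arrival_def by (metis finite_imageI image_iff image_is_empty)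
  with assms(2) have "j \<in> S - {x}" by auto
  then have "first_arrival \<pi> (S - {x}) \<le> first_arrival \<pi> S"
    using assms(1) j(2) unfolding first_arrival_def by (metis Min_le finite_Diff finite_imageI imageI)
  moreover have "first_arrival \<pi> S \<le> first_arrival \<pi> (S - {x})"
    using assms(1) \<open>j \<in> S - {x}\<close> unfolding first_arrival_def
    by (intro Min_antimono) auto
  ultimately show ?thesis by simp
qed simp

lemma greedy_struct_subset_take:
  assumes "greedy_struct v \<pi> t C" "S \<in> C"
  shows "S \<subseteq> set (take t \<pi>)"
  using assms
proof (induction arbitrary: S rule: greedy_struct.induct)
  case (step t C S0)
  have "set (take t \<pi>) \<subseteq> set (take (Suc t) \<pi>)" "\<pi> ! t \<in> set (take (Suc t) \<pi>)"
    using step.hyps(2) by (auto simp: take_Suc_conv_app_nth)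
  then show ?case using step by blast
qed simp

abbreviation join_coalition :: "'a set set \<Rightarrow> 'a set \<Rightarrow> 'a \<Rightarrow> 'a set set" where
  "join_coalition C S0 x \<equiv> insert (S0 \<union> {x}) (C - {S0})"

lemma join_coalition_Diff:
  assumes "S0 \<in> C \<union> {{}}" "\<forall>S \<in> C. x \<notin> S" "S \<in> join_coalition C S0 x"
  shows "S - {x} \<in> C \<union> {{}}"
proof (cases "S \<in> C - {S0}")
  case True
  with assms(2) show ?thesis by simp
next
  case False
  then have "S - {x} = S0" using assms by auto
  with assms(1) show ?thesis by simp
qed

lemma temporally_nash_stable_join:
  assumes stable: "temporally_nash_stable v \<pi> C"
    and old: "\<forall>S \<in> C. finite S \<and> (\<forall>j \<in> S. arr \<pi> j < arr \<pi> x)"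
    and S0: "S0 \<in> C \<union> {{}}"
    and greedy: "\<forall>S' \<in> C \<union> {{}}. amc v \<pi> x (S' \<union> {x}) \<le> amc v \<pi> x (S0 \<union> {x})"
  shows "temporally_nash_stable v \<pi> (join_coalition C S0 x)"
  unfolding temporally_nash_stable_def
proof (intro ballI allI impI)
  fix S i S'
  assume S: "S \<in> join_coalition C S0 x" and i: "i \<in> S"
    and S': "S' \<in> join_coalition C S0 x \<and> first_arrival \<pi> S' < arr \<pi> i \<or> S' = {}"
  have x_new: "\<forall>S \<in> C. x \<notin> S" using old by blast
  have S'_old: "S' - {x} \<in> C \<union> {{}}"
    using S' join_coalition_Diff[OF S0 x_new] by auto
  show "amc v \<pi> i (S' \<union> {i}) \<le> amc v \<pi> i S"
  proof (cases "i = x")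
    case True
    then have "S = S0 \<union> {x}" using S i x_new by blast
    moreover have "S' \<union> {x} = (S' - {x}) \<union> {x}" by blast
    ultimately show ?thesis using greedy S'_old True by metis
  next
    case False
    have S_old: "S - {x} \<in> C" "i \<in> S - {x}"
      using join_coalition_Diff[OF S0 x_new S] i False by auto
    then have arr_i: "arr \<pi> i < arr \<pi> x" using old by blast
    have "S' - {x} \<in> C \<and> first_arrival \<pi> (S' - {x}) < arr \<pi> i \<or> S' - {x} = {}"
    proof (cases "S' = {}")
      case False
      with S' have fa: "first_arrival \<pi> S' < arr \<pi> i" by auto
      have "finite (S' - {x})" using S'_old old by (metis Un_iff finite.emptyI singletonD)
      then have "first_arrival \<pi> (S' - {x}) < arr \<pi> i"
        using first_arrival_Diff_later[of S' \<pi> x] fa arr_i by simp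
      with S'_old show ?thesis by blast
    qed simp
    then have "amc v \<pi> i ((S' - {x}) \<union> {i}) \<le> amc v \<pi> i (S - {x})"
      using stable S_old unfolding temporally_nash_stable_def by blast
    moreover have "(S' - {x}) \<union> {i} = (S' \<union> {i}) - {x}" using False by blast
    ultimately show ?thesis using amc_Diff_later[OF arr_i] by metis
  qed
qed

lemma greedy_struct_temporally_nash_stable:
  assumes "greedy_struct v \<pi> t C" "distinct \<pi>"
  shows "temporally_nash_stable v \<pi> C"
  using assms(1)
proof (induction rule: greedy_struct.induct)
  case init
  then show ?case by (simp add: temporally_nash_stable_def)
next
  case (step t C S0)
  have "\<forall>S \<in> C. finite S \<and> (\<forall>j \<in> S. arr \<pi> j < arr \<pi> (\<pi> ! t))"
    using greedy_struct_subset_take[OF step.hyps(1)] arr_less_if_in_take[OF assms(2)]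
      arr_nth[OF assms(2) step.hyps(2)] finite_subset by fastforce
  with step show ?case by (blast intro: temporally_nash_stable_join)
qed

theorem proposition3:
  fixes N :: "'a set" and \<pi> :: "'a list" and v :: "'a set \<Rightarrow> real"
    and mn mx :: real and Cg :: "'a set set"
  assumes "finite N"
    and "distinct \<pi>" and "set \<pi> = N"
    and "v {} = 0"
    and "\<forall>S. S \<subseteq> N \<longrightarrow> v S \<ge> 0"
    and "0 < mn" and "mn \<le> mx"
    and "\<forall>S T. S \<noteq> {} \<and> S \<subseteq> T \<and> T \<subseteq> N \<longrightarrow> mn \<le> v S \<and> v S \<le> v T \<and> v T \<le> mx"
    and "greedy_struct v \<pi> (length \<pi>) Cg"
  shows "\<forall>S \<in> Cg. \<forall>i \<in> S. \<forall>S'.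
           ((S' \<in> Cg \<and> first_arrival \<pi> S' < arr \<pi> i) \<or> S' = {}) \<longrightarrow>
           \<not> (amc v \<pi> i (S' \<union> {i}) > amc v \<pi> i S)"
  using greedy_struct_temporally_nash_stable[OF assms(9,2)]
  by (simp add: temporally_nash_stable_def not_less)

end
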